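(* For $\mathsf{BST}^{\otimes}$-conjunctions, finite satisfiability and hereditarily finite satisfiability are equivalent: a $\mathsf{BST}^{\otimes}$-conjunction has a finite model if and only if it has a hereditarily finite model. Moreover, a $\mathsf{BST}^{\otimes}$-conjunction with $n$ variables is (hereditarily) finitely satisfiable if and only if it is fulfilled by an accessible $\otimes$-graph of size at most $2^{n}-1$ that admits a topological $\otimes$-order.
   Context: Sets range over the von Neumann universe of well-founded sets; $\mathsf{HF}$ denotes the set of hereditarily finite sets. For sets $s,t$, $s\otimes t=\{\{u,v\} : u\in s,\ v\in t\}$. A set assignment $M$ maps variables to sets; it satisfies a formula if the formula is true when each variable $v$ is interpreted as $Mv$. A $\mathsf{BST}^{\otimes}$-conjunction is a finite conjunction of literals of the forms $x=y\cup z$, $x=y\setminus z$, $x=y\otimes z$, $x\neq y$ ($x,y,z$ set variables). It is finitely (resp. hereditarily finitely) satisfiable if it is satisfied by some set assignment $M$ on its variables with $\bigcup_v Mv$ finite (resp. $\bigcup_v Mv\in\mathsf{HF}$). A $\otimes$-graph $\mathcal G=(\mathcal P,\mathcal N,\mathcal T)$ consists of a set $\mathcal P$ of places, the set of nodes $\mathcal N=\mathcal P\otimes\mathcal P$ (the nonempty subsets of $\mathcal P$ with at most two elements), $\mathcal P\cap\mathcal N=\emptyset$, and a target map $\mathcal T:\mathcal N\to\mathcal P(\mathcal P)$. Size of $\mathcal G$ is $|\mathcal P|$. A source place is a place belonging to no $\mathcal T(A)$; a node $A$ is a $\otimes$-node if $\mathcal T(A)\neq\emptyset$. The accessible places form the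 smallest set of places containing all source places and containing $\mathcal T(A)$ whenever all places of $A$ belong to it; $\mathcal G$ is accessible if every place is accessible. A topological $\otimes$-order of $\mathcal G$ is a total order $\prec$ on $\mathcal P$ such that $\max_\prec A\prec\max_\prec\mathcal T(A)$ for every $\otimes$-node $A$. A map $\mathfrak F:\mathrm{Vars}(\Phi)\to\mathcal P(\mathcal P)$ is $\mathcal G$-fulfilling for $\Phi$ if: (a) $\mathfrak F(x)=\mathfrak F(y)\star\mathfrak F(z)$ for each conjunct $x=y\star z$, $\star\in\{\cup,\setminus\}$; (b) $\mathfrak F(x)\neq\mathfrak F(y)$ for each conjunct $x\neq y$; (c) for each conjunct $x=y\otimes z$: (c1) $\emptyset\neq\mathcal T(\{\upsilon,\zeta\})\subseteq\mathfrak F(x)$ for all $\upsilon\in\mathfrak F(y),\zeta\in\mathfrak F(z)$; (c2) $\mathfrak F(x)\subseteq\bigcup\{\mathcal T(A):A\in\mathfrak F(y)\otimes\mathfrak F(z)\}$; (c3) $\bigcup\{\mathcal T(A):A\in\mathcal N\setminus(\mathfrak F(y)\otimes\mathfrak F(z))\}\cap\mathfrak F(x)=\emptyset$. $\mathcal G$ fulfills $\Phi$ if such a map exists. *)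

theory Defs
  imports Main
begin

text \<open>The von Neumann
  universe (restricted to any set-sized transitive fragment containing HF) is such
  a structure.\<close>

definition set_universe :: "('u \<Rightarrow> 'u \<Rightarrow> bool) \<Rightarrow> bool" where
  "set_universe mem \<longleftrightarrow>
     wfp mem \<and>
     (\<forall>x y. (\<forall>z. mem z x \<longleftrightarrow> mem z y) \<longrightarrow> x = y) \<and>
     (\<forall>S. finite S \<longrightarrow> (\<exists>x. \<forall>z. mem z x \<longleftrightarrow> z \<in> S))"

definition elems :: "('u \<Rightarrow> 'u \<Rightarrow> bool) \<Rightarrow> 'u \<Rightarrow> 'u set" where
  "elems mem x = {z. mem z x}"

datatype 'v literal =
    LUn 'v 'v 'v
  | LDiff 'v 'v 'v
  | LTens 'v 'v 'v
  | LNeq 'v 'v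

fun lit_vars :: "'v literal \<Rightarrow> 'v set" where
  "lit_vars (LUn x y z) = {x, y, z}"
| "lit_vars (LDiff x y z) = {x, y, z}"
| "lit_vars (LTens x y z) = {x, y, z}"
| "lit_vars (LNeq x y) = {x, y}"

definition vars :: "'v literal list \<Rightarrow> 'v set" where
  "vars \<Phi> = (\<Union>l\<in>set \<Phi>. lit_vars l)"

definition set_otimes :: "'a set \<Rightarrow> 'a set \<Rightarrow> 'a set set" where
  "set_otimes s t = {{u, v} | u v. u \<in> s \<and> v \<in> t}"

fun sat_lit :: "('u \<Rightarrow> 'u \<Rightarrow> bool) \<Rightarrow> ('v \<Rightarrow> 'u) \<Rightarrow> 'v literal \<Rightarrow> bool" where
  "sat_lit mem M (LUn x y z) \<longleftrightarrow> elems mem (M x) = elems mem (M y) \<union> elems mem (M z)"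
| "sat_lit mem M (LDiff x y z) \<longleftrightarrow> elems mem (M x) = elems mem (M y) - elems mem (M z)"
| "sat_lit mem M (LTens x y z) \<longleftrightarrow>
     elems mem (M x) = {w. \<exists>u v. mem u (M y) \<and> mem v (M z) \<and> elems mem w = {u, v}}"
| "sat_lit mem M (LNeq x y) \<longleftrightarrow> M x \<noteq> M y"

definition satisfies :: "('u \<Rightarrow> 'u \<Rightarrow> bool) \<Rightarrow> ('v \<Rightarrow> 'u) \<Rightarrow> 'v literal list \<Rightarrow> bool" where
  "satisfies mem M \<Phi> \<longleftrightarrow> (\<forall>l\<in>set \<Phi>. sat_lit mem M l)"

definition fin_sat :: "('u \<Rightarrow> 'u \<Rightarrow> bool) \<Rightarrow> 'v literal list \<Rightarrow> bool" where
  "fin_sat mem \<Phi> \<longleftrightarrow>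
     (\<exists>M. satisfies mem M \<Phi> \<and> finite (\<Union>v\<in>vars \<Phi>. elems mem (M v)))"

text \<open>Hereditarily finitely satisfiable: \<Union>_v M v \<in> HF, i.e. (membership being
  well-founded) the transitive closure of \<Union>_v M v is finite.\<close>
definition hf_sat :: "('u \<Rightarrow> 'u \<Rightarrow> bool) \<Rightarrow> 'v literal list \<Rightarrow> bool" where
  "hf_sat mem \<Phi> \<longleftrightarrow>
     (\<exists>M. satisfies mem M \<Phi> \<and>
          finite {z. \<exists>v\<in>vars \<Phi>. mem\<^sup>+\<^sup>+ z (M v)})"

text \<open>Places are natural numbers; nodes are (HOL) sets of places, so places and
  nodes are automatically disjoint.\<close>

definition nodes :: "nat set \<Rightarrow> nat set set" where
  "nodes P = set_otimes P P"

definition otimes_graph :: "nat set \<Rightarrow> (nat set \<Rightarrow> nat set) \<Rightarrow> bool" where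
  "otimes_graph P T \<longleftrightarrow> finite P \<and> (\<forall>A\<in>nodes P. T A \<subseteq> P)"

definition source_place :: "nat set \<Rightarrow> (nat set \<Rightarrow> nat set) \<Rightarrow> nat \<Rightarrow> bool" where
  "source_place P T p \<longleftrightarrow> p \<in> P \<and> (\<forall>A\<in>nodes P. p \<notin> T A)"

inductive_set accessible_places :: "nat set \<Rightarrow> (nat set \<Rightarrow> nat set) \<Rightarrow> nat set"
  for P T where
  src: "source_place P T p \<Longrightarrow> p \<in> accessible_places P T"
| step: "A \<in> nodes P \<Longrightarrow> (\<forall>a\<in>A. a \<in> accessible_places P T) \<Longrightarrow> p \<in> T A
          \<Longrightarrow> p \<in> accessible_places P T"

definition accessible :: "nat set \<Rightarrow> (nat set \<Rightarrow> nat set) \<Rightarrow> bool" where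
  "accessible P T \<longleftrightarrow> P \<subseteq> accessible_places P T"

definition max_wrt :: "(nat \<times> nat) set \<Rightarrow> nat set \<Rightarrow> nat" where
  "max_wrt R A = (THE m. m \<in> A \<and> (\<forall>a\<in>A. a \<noteq> m \<longrightarrow> (a, m) \<in> R))"

definition topological_order :: "nat set \<Rightarrow> (nat set \<Rightarrow> nat set) \<Rightarrow> (nat \<times> nat) set \<Rightarrow> bool" where
  "topological_order P T R \<longleftrightarrow>
     strict_linear_order_on P R \<and> R \<subseteq> P \<times> P \<and>
     (\<forall>A\<in>nodes P. T A \<noteq> {} \<longrightarrow> (max_wrt R A, max_wrt R (T A)) \<in> R)"

fun fulfills_lit :: "nat set \<Rightarrow> (nat set \<Rightarrow> nat set) \<Rightarrow> ('v \<Rightarrow> nat set) \<Rightarrow> 'v literal \<Rightarrow> bool" where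
  "fulfills_lit P T F (LUn x y z) \<longleftrightarrow> F x = F y \<union> F z"
| "fulfills_lit P T F (LDiff x y z) \<longleftrightarrow> F x = F y - F z"
| "fulfills_lit P T F (LNeq x y) \<longleftrightarrow> F x \<noteq> F y"
| "fulfills_lit P T F (LTens x y z) \<longleftrightarrow>
     (\<forall>u\<in>F y. \<forall>w\<in>F z. T {u, w} \<noteq> {} \<and> T {u, w} \<subseteq> F x) \<and>
     F x \<subseteq> (\<Union>A\<in>set_otimes (F y) (F z). T A) \<and>
     (\<Union>A\<in>nodes P - set_otimes (F y) (F z). T A) \<inter> F x = {}"

definition fulfilling :: "nat set \<Rightarrow> (nat set \<Rightarrow> nat set) \<Rightarrow> ('v \<Rightarrow> nat set) \<Rightarrow> 'v literal list \<Rightarrow> bool" where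
  "fulfilling P T F \<Phi> \<longleftrightarrow>
     (\<forall>v\<in>vars \<Phi>. F v \<subseteq> P) \<and> (\<forall>l\<in>set \<Phi>. fulfills_lit P T F l)"

definition fulfills :: "nat set \<Rightarrow> (nat set \<Rightarrow> nat set) \<Rightarrow> 'v literal list \<Rightarrow> bool" where
  "fulfills P T \<Phi> \<longleftrightarrow> (\<exists>F. fulfilling P T F \<Phi>)"

end

theory Submission
  imports Defs
begin

text \<open>A finite model M yields a graph whose places are the nonempty Venn regions of the sets M v
  (at most 2^n - 1 of them): F x consists of the regions inside M x, and the targets of a node
  {p, q} occurring in a literal x = y \<otimes> z are the regions of the pairs of elements of p and q.
  Every element of such an M x is a pair of elements of smaller rank, which makes the graph
  accessible, and ordering places by the maximal rank of their elements is a topological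
  \<otimes>-order.

  Conversely, let such a graph fulfil the conjunction through F. Following accessibility, reserve
  for each place a core of 4 |P| hereditarily finite sets, disjoint across places: fresh atoms for
  source places, fresh pairs of core elements of a generating node otherwise. Close the cores
  under the rule that a pair of realizations of a and b realizes the greatest target of {a, b}.
  Realization is functional, every place is realized, and along the topological order each place
  has only finitely many realizations; so letting M x be the set of realizations of the places in
  F x gives a hereditarily finite model.\<close>

section \<open>Sets in a well-founded universe\<close>

locale universe =
  fixes mem :: "'u \<Rightarrow> 'u \<Rightarrow> bool"
  assumes set_universe: "set_universe mem"
begin

lemma wfp_mem: "wfp mem"
  using set_universe unfolding set_universe_def by blast

lemma elems_inject: "elems mem x = elems mem y \<Longrightarrow> x = y"
  using set_universe unfolding set_universe_def elems_def by (metis mem_Collect_eq)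

lemma not_mem_self: "\<not> mem x x"
  using wfp_imp_irreflp[OF wfp_mem] by (simp add: irreflp_def)

definition set_of :: "'u set \<Rightarrow> 'u" where
  "set_of S = (SOME x. elems mem x = S)"

lemma elems_set_of: "finite S \<Longrightarrow> elems mem (set_of S) = S"
proof -
  assume "finite S"
  then obtain x where "\<forall>z. mem z x \<longleftrightarrow> z \<in> S"
    using set_universe unfolding set_universe_def by blast
  hence "elems mem x = S" unfolding elems_def by auto
  thus ?thesis unfolding set_of_def by (rule someI)
qed

definition upair :: "'u \<Rightarrow> 'u \<Rightarrow> 'u" where
  "upair u v = set_of {u, v}"

lemma elems_upair: "elems mem (upair u v) = {u, v}"
  unfolding upair_def by (simp add: elems_set_of)

lemma upair_unique: "elems mem w = {u, v} \<Longrightarrow> w = upair u v"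
  by (rule elems_inject) (simp add: elems_upair)

lemma upair_inject: "upair u v = upair u' v' \<Longrightarrow> {u, v} = {u', v'}"
  by (metis elems_upair)

lemma mem_upair: "mem u (upair u v)" "mem v (upair u v)"
  using elems_upair unfolding elems_def by auto

definition hered_finite :: "'u \<Rightarrow> bool" where
  "hered_finite x \<longleftrightarrow> finite {z. mem\<^sup>+\<^sup>+ z x}"

lemma hered_finite_if_elems:
  assumes "finite (elems mem x)" and "\<forall>s\<in>elems mem x. hered_finite s"
  shows "hered_finite x"
proof -
  have "{z. mem\<^sup>+\<^sup>+ z x} \<subseteq> elems mem x \<union> (\<Union>s\<in>elems mem x. {z. mem\<^sup>+\<^sup>+ z s})"
  proof
    fix z assume "z \<in> {z. mem\<^sup>+\<^sup>+ z x}"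
    thus "z \<in> elems mem x \<union> (\<Union>s\<in>elems mem x. {z. mem\<^sup>+\<^sup>+ z s})"
      by (auto elim: tranclp.cases simp: elems_def)
  qed
  thus ?thesis using assms unfolding hered_finite_def by (meson finite_UN_I finite_Un finite_subset)
qed

lemma hered_finite_set_of: "finite S \<Longrightarrow> \<forall>s\<in>S. hered_finite s \<Longrightarrow> hered_finite (set_of S)"
  by (rule hered_finite_if_elems) (simp_all add: elems_set_of)

lemma hered_finite_upair: "hered_finite u \<Longrightarrow> hered_finite v \<Longrightarrow> hered_finite (upair u v)"
  unfolding upair_def by (rule hered_finite_set_of) auto

fun von_neumann :: "nat \<Rightarrow> 'u" where
  "von_neumann 0 = set_of {}"
| "von_neumann (Suc n) = set_of (insert (von_neumann n) (elems mem (von_neumann n)))"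

lemma elems_von_neumann: "elems mem (von_neumann n) = von_neumann ` {..<n}"
  by (induction n) (simp_all add: elems_set_of lessThan_Suc)

lemma card_elems_von_neumann: "card (elems mem (von_neumann n)) = n"
proof (induction n)
  case (Suc n)
  have "von_neumann n \<notin> elems mem (von_neumann n)" using not_mem_self unfolding elems_def by auto
  then show ?case using Suc by (simp add: elems_set_of elems_von_neumann)
qed (simp add: elems_set_of)

lemma hered_finite_von_neumann: "hered_finite (von_neumann n)"
  by (induction n rule: less_induct) (intro hered_finite_if_elems, auto simp: elems_von_neumann)

text \<open>Atoms serve as the realizations of source places: they are hereditarily finite, there are
  infinitely many of them, and having at least three elements they are never unordered pairs.\<close>

definition atoms :: "'u set" where
  "atoms = von_neumann ` {3..}"

lemma infinite_atoms: "infinite atoms"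
proof -
  have "inj von_neumann" by (rule injI) (metis card_elems_von_neumann)
  thus ?thesis unfolding atoms_def
    by (metis finite_imageD infinite_Ici inj_on_subset subset_UNIV)
qed

lemma hered_finite_atom: "x \<in> atoms \<Longrightarrow> hered_finite x"
  unfolding atoms_def using hered_finite_von_neumann by auto

lemma atom_not_upair: "x \<in> atoms \<Longrightarrow> x \<noteq> upair u v"
proof
  assume "x \<in> atoms" "x = upair u v"
  then obtain n where "n \<ge> 3" "x = von_neumann n" unfolding atoms_def by auto
  hence "card (elems mem x) \<ge> 3" using card_elems_von_neumann by simp
  moreover have "card (elems mem x) \<le> 2" using \<open>x = upair u v\<close> elems_upair
    by (simp add: card_insert_le_m1)
  ultimately show False by simp
qed

end

section \<open>Conjunctions and \<otimes>-graphs\<close>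

lemma finite_vars: "finite (vars \<Phi>)"
proof -
  have "finite (lit_vars l)" for l :: "'v literal" by (cases l) auto
  thus ?thesis unfolding vars_def by blast
qed

lemma lit_vars_subset_vars: "l \<in> set \<Phi> \<Longrightarrow> lit_vars l \<subseteq> vars \<Phi>"
  unfolding vars_def by blast

lemma max_wrt_greatest:
  assumes slo: "strict_linear_order_on P R" and "A \<subseteq> P" "finite A" "A \<noteq> {}"
  shows "max_wrt R A \<in> A" and "\<And>a. a \<in> A \<Longrightarrow> a \<noteq> max_wrt R A \<Longrightarrow> (a, max_wrt R A) \<in> R"
proof -
  have tr: "trans R" and ir: "irrefl R" and tot: "total_on P R"
    using slo unfolding strict_linear_order_on_def by auto
  let ?greatest = "\<lambda>m. m \<in> A \<and> (\<forall>a\<in>A. a \<noteq> m \<longrightarrow> (a, m) \<in> R)"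
  have "\<exists>m. ?greatest m"
    using \<open>finite A\<close> \<open>A \<noteq> {}\<close> \<open>A \<subseteq> P\<close>
  proof (induction A rule: finite_ne_induct)
    case (insert x F)
    then obtain m where m: "m \<in> F" "\<forall>a\<in>F. a \<noteq> m \<longrightarrow> (a, m) \<in> R" by auto
    have "x \<in> P" "m \<in> P" using insert m by auto
    show ?case
    proof (cases "(m, x) \<in> R")
      case True
      hence "\<forall>a\<in>insert x F. a \<noteq> x \<longrightarrow> (a, x) \<in> R"
        using m tr by (auto dest: transD)
      then show ?thesis by blast
    next
      case False
      hence "(x, m) \<in> R"
        using tot \<open>x \<in> P\<close> \<open>m \<in> P\<close> insert.hyps m(1) unfolding total_on_def by metis
      then show ?thesis using m by auto
    qed
  qed auto
  then obtain m where "?greatest m" ..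
  moreover have "m' = m" if "?greatest m'" for m'
    using that \<open>?greatest m\<close> ir tr unfolding irrefl_def by (metis transD)
  ultimately have "?greatest (max_wrt R A)"
    unfolding max_wrt_def by (rule theI)
  thus "max_wrt R A \<in> A" "\<And>a. a \<in> A \<Longrightarrow> a \<noteq> max_wrt R A \<Longrightarrow> (a, max_wrt R A) \<in> R"
    by auto
qed

lemma mem_nodes_iff: "A \<in> nodes P \<longleftrightarrow> (\<exists>a b. A = {a, b} \<and> a \<in> P \<and> b \<in> P)"
  unfolding nodes_def set_otimes_def by auto

lemma accessible_extend:
  assumes "otimes_graph P T" "accessible P T" "D \<subset> P"
  obtains q where "q \<in> P - D" "source_place P T q \<or> (\<exists>A\<in>nodes P. A \<subseteq> D \<and> q \<in> T A)"
proof (rule ccontr)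
  note extend = that
  assume "\<not> thesis"
  have "p \<in> D" if "p \<in> accessible_places P T" for p
    using that
  proof (induction rule: accessible_places.induct)
    case (src p)
    then show ?case using extend \<open>\<not> thesis\<close> unfolding source_place_def by auto
  next
    case (step A p)
    have "p \<in> P" using \<open>otimes_graph P T\<close> step unfolding otimes_graph_def by auto
    then show ?case using extend \<open>\<not> thesis\<close> step by auto
  qed
  thus False using assms unfolding accessible_def by auto
qed

section \<open>From a graph to a hereditarily finite model\<close>

context universe
begin

lemma fresh_upairs:
  assumes "finite A" "finite B" "finite Used"
    and "2 * n \<le> card A" "2 * n \<le> card B" "m + card Used \<le> n * n"
  obtains C where "C \<subseteq> (\<lambda>(u, v). upair u v) ` (A \<times> B) - Used" "card C = m"
proof -
  obtain C1 where C1: "C1 \<subseteq> A" "card C1 = n"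
    using obtain_subset_with_card_n[of n A] assms(4) by auto
  have "finite C1" using C1(1) \<open>finite A\<close> finite_subset by blast
  hence "n \<le> card (B - C1)"
    using diff_card_le_card_Diff[of C1 B] assms(5) C1(2) by linarith
  then obtain C2 where C2: "C2 \<subseteq> B - C1" "card C2 = n"
    using obtain_subset_with_card_n[of n "B - C1"] by auto
  have "inj_on (\<lambda>(u, v). upair u v) (C1 \<times> C2)"
  proof (rule inj_onI, clarify)
    fix u v u' v' assume uv: "u \<in> C1" "v \<in> C2" "u' \<in> C1" "v' \<in> C2" "upair u v = upair u' v'"
    hence "{u, v} = {u', v'}" using upair_inject by blast
    moreover have "u \<noteq> v'" "v \<noteq> u'" using uv C2 by auto
    ultimately show "u = u' \<and> v = v'" by (metis doubleton_eq_iff)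
  qed
  hence "card ((\<lambda>(u, v). upair u v) ` (C1 \<times> C2)) = n * n"
    by (simp add: card_image card_cartesian_product C1(2) C2(2))
  moreover have "(\<lambda>(u, v). upair u v) ` (C1 \<times> C2) \<subseteq> (\<lambda>(u, v). upair u v) ` (A \<times> B)"
    using C1(1) C2(1) by blast
  ultimately have "n * n \<le> card ((\<lambda>(u, v). upair u v) ` (A \<times> B))"
    by (metis assms(1,2) card_mono finite_SigmaI finite_imageI)
  hence "m \<le> card ((\<lambda>(u, v). upair u v) ` (A \<times> B) - Used)"
    using diff_card_le_card_Diff[OF \<open>finite Used\<close>, of "(\<lambda>(u, v). upair u v) ` (A \<times> B)"] assms(6)
    by linarith
  thus ?thesis using obtain_subset_with_card_n that by metis
qed

definition pair_of_cores ::
  "(nat set \<Rightarrow> nat set) \<Rightarrow> nat set \<Rightarrow> (nat \<Rightarrow> 'u set) \<Rightarrow> nat \<Rightarrow> 'u \<Rightarrow> bool" where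
  "pair_of_cores T D core p e \<longleftrightarrow>
     (\<exists>a\<in>D. \<exists>b\<in>D. \<exists>u\<in>core a. \<exists>v\<in>core b. e = upair u v \<and> p \<in> T {a, b})"

text \<open>The core of a place is a reserve of sets that will realize it.\<close>

definition core_assignment ::
  "nat set \<Rightarrow> (nat set \<Rightarrow> nat set) \<Rightarrow> nat \<Rightarrow> nat set \<Rightarrow> (nat \<Rightarrow> 'u set) \<Rightarrow> bool" where
  "core_assignment P T m D core \<longleftrightarrow> D \<subseteq> P \<and>
    (\<forall>p\<in>D. finite (core p) \<and> card (core p) = m \<and> (\<forall>e\<in>core p. hered_finite e)) \<and>
    (\<forall>p\<in>D. \<forall>p'\<in>D. p \<noteq> p' \<longrightarrow> core p \<inter> core p' = {}) \<and>
    (\<forall>p\<in>D. source_place P T p \<longrightarrow> core p \<subseteq> atoms) \<and>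
    (\<forall>p\<in>D. \<not> source_place P T p \<longrightarrow> (\<forall>e\<in>core p. pair_of_cores T D core p e))"

lemma core_assignmentD:
  assumes "core_assignment P T m D core"
  shows "D \<subseteq> P"
    and "\<And>p. p \<in> D \<Longrightarrow> finite (core p)"
    and "\<And>p. p \<in> D \<Longrightarrow> card (core p) = m"
    and "\<And>p e. p \<in> D \<Longrightarrow> e \<in> core p \<Longrightarrow> hered_finite e"
    and "\<And>p p'. p \<in> D \<Longrightarrow> p' \<in> D \<Longrightarrow> p \<noteq> p' \<Longrightarrow> core p \<inter> core p' = {}"
    and "\<And>p. p \<in> D \<Longrightarrow> source_place P T p \<Longrightarrow> core p \<subseteq> atoms"
    and "\<And>p e. p \<in> D \<Longrightarrow> \<not> source_place P T p \<Longrightarrow> e \<in> core p \<Longrightarrow> pair_of_cores T D core p e"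
  using assms unfolding core_assignment_def by blast+

lemma pair_of_cores_insert:
  "q \<notin> D \<Longrightarrow> pair_of_cores T D core p e \<Longrightarrow> pair_of_cores T (insert q D) (core(q := C)) p e"
  unfolding pair_of_cores_def by (metis fun_upd_other insertCI)

lemma core_assignment_insert:
  assumes core: "core_assignment P T m D core" and q: "q \<in> P - D"
    and C: "finite C" "card C = m" "C \<inter> (\<Union>p\<in>D. core p) = {}" "\<forall>e\<in>C. hered_finite e"
      "source_place P T q \<Longrightarrow> C \<subseteq> atoms"
      "\<not> source_place P T q \<Longrightarrow> \<forall>e\<in>C. pair_of_cores T D core q e"
  shows "core_assignment P T m (insert q D) (core(q := C))"
proof -
  note core = core_assignmentD[OF core]
  show ?thesis
    unfolding core_assignment_def
  proof (intro conjI ballI impI)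
    fix p p' assume "p \<in> insert q D" "p' \<in> insert q D" "p \<noteq> p'"
    then show "(core(q := C)) p \<inter> (core(q := C)) p' = {}"
      using core(5) C(3) by (cases "p = q"; cases "p' = q") auto
  next
    fix p e assume "p \<in> insert q D" "\<not> source_place P T p" "e \<in> (core(q := C)) p"
    then show "pair_of_cores T (insert q D) (core(q := C)) p e"
      using core(7) C(6) q pair_of_cores_insert by (cases "p = q") auto
  next
    fix p e assume "p \<in> insert q D" "e \<in> (core(q := C)) p"
    then show "hered_finite e" using core(4) C(4) by (cases "p = q") auto
  next
    fix p assume "p \<in> insert q D" "source_place P T p"
    then show "(core(q := C)) p \<subseteq> atoms" using core(6) C(5) by (cases "p = q") auto
  qed (use core(1-3) q C in auto)
qed

lemma core_assignment_insert_source: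
  assumes core: "core_assignment P T m D core" and q: "q \<in> P - D" "source_place P T q"
    and "finite D"
  obtains C where "core_assignment P T m (insert q D) (core(q := C))"
proof -
  have "finite (\<Union>p\<in>D. core p)" using core_assignmentD(2)[OF core] \<open>finite D\<close> by auto
  hence "infinite (atoms - (\<Union>p\<in>D. core p))" using infinite_atoms by (rule Diff_infinite_finite)
  then obtain C where C: "finite C" "card C = m" "C \<subseteq> atoms - (\<Union>p\<in>D. core p)"
    by (metis infinite_arbitrarily_large)
  have "core_assignment P T m (insert q D) (core(q := C))"
    by (rule core_assignment_insert[OF core q(1) C(1,2)]) (use C(3) q(2) hered_finite_atom in blast)+
  then show ?thesis by (rule that)
qed

lemma core_assignment_insert_generated:
  assumes core: "core_assignment P T m D core" and q: "q \<in> P - D" "\<not> source_place P T q"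
    and ab: "a \<in> D" "b \<in> D" "q \<in> T {a, b}"
    and "finite D" "2 * n \<le> m" "m + card (\<Union>p\<in>D. core p) \<le> n * n"
  obtains C where "core_assignment P T m (insert q D) (core(q := C))"
proof -
  note core_props = core_assignmentD[OF core]
  have "finite (\<Union>p\<in>D. core p)" using core_props(2) \<open>finite D\<close> by auto
  obtain C where C: "C \<subseteq> (\<lambda>(u, v). upair u v) ` (core a \<times> core b) - (\<Union>p\<in>D. core p)"
      "card C = m"
    by (rule fresh_upairs[of "core a" "core b" "\<Union>p\<in>D. core p" n m])
      (use core_props(2,3) ab assms(8,9) \<open>finite (\<Union>p\<in>D. core p)\<close> in simp_all)
  have "finite ((\<lambda>(u, v). upair u v) ` (core a \<times> core b))" using core_props(2) ab by simp
  hence fin: "finite C" by (rule finite_subset[rotated]) (use C(1) in blast)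
  have pairs: "\<forall>e\<in>C. pair_of_cores T D core q e" and hf: "\<forall>e\<in>C. hered_finite e"
  proof (safe intro!: ballI)
    fix e assume "e \<in> C"
    then obtain u v where uv: "u \<in> core a" "v \<in> core b" "e = upair u v" using C(1) by auto
    then show "pair_of_cores T D core q e" using ab unfolding pair_of_cores_def by blast
    show "hered_finite e" using uv ab core_props(4) hered_finite_upair by simp
  qed
  have fresh: "C \<inter> (\<Union>p\<in>D. core p) = {}" using C(1) by blast
  have "core_assignment P T m (insert q D) (core(q := C))"
    using core_assignment_insert[OF core q(1) fin C(2) fresh hf _ pairs] q(2) by blast
  then show ?thesis by (rule that)
qed

text \<open>Cores of size 4 |P| leave room: while fewer than |P| places are served, a generated place
  still has (2 |P|)^2 = 4 |P| * |P| candidate pairs, of which fewer than 4 |P| * |P| are used.\<close>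

lemma core_assignment_extend:
  assumes "otimes_graph P T" "accessible P T"
    and core: "core_assignment P T (4 * card P) D core" and "card D < card P"
  obtains q C where "q \<in> P - D" "core_assignment P T (4 * card P) (insert q D) (core(q := C))"
proof -
  let ?k = "card P" let ?m = "4 * card P"
  note core_props = core_assignmentD[OF core]
  have "finite P" using assms(1) unfolding otimes_graph_def by auto
  hence "finite D" using core_props(1) finite_subset by blast
  have "D \<subset> P" using core_props(1) \<open>card D < card P\<close> by auto
  then obtain q where q: "q \<in> P - D" and
    q_generated: "source_place P T q \<or> (\<exists>A\<in>nodes P. A \<subseteq> D \<and> q \<in> T A)"
    by (rule accessible_extend[OF assms(1,2)])
  have "card (\<Union>p\<in>D. core p) \<le> (\<Sum>p\<in>D. card (core p))" by (rule card_UN_le[OF \<open>finite D\<close>])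
  also have "\<dots> = card D * ?m" using core_props(3) by simp
  moreover have "Suc (card D) * ?m \<le> ?k * ?m" using \<open>card D < card P\<close> by (intro mult_le_mono1) simp
  ultimately have room: "?m + card (\<Union>p\<in>D. core p) \<le> (2 * ?k) * (2 * ?k)" by simp
  show ?thesis
  proof (cases "source_place P T q")
    case True
    then obtain C where "core_assignment P T ?m (insert q D) (core(q := C))"
      by (rule core_assignment_insert_source[OF core q _ \<open>finite D\<close>])
    then show ?thesis using that q by blast
  next
    case False
    then obtain a b where ab: "a \<in> D" "b \<in> D" "q \<in> T {a, b}"
      using q_generated by (auto simp: mem_nodes_iff)
    obtain C where "core_assignment P T ?m (insert q D) (core(q := C))"
      by (rule core_assignment_insert_generated[OF core q False ab \<open>finite D\<close> _ room]) simp
    then show ?thesis using that q by blast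
  qed
qed

lemma core_assignment_exists:
  assumes "otimes_graph P T" "accessible P T"
  obtains core where "core_assignment P T (4 * card P) P core"
proof -
  have "\<exists>D core. card D = j \<and> core_assignment P T (4 * card P) D core" if "j \<le> card P" for j
    using that
  proof (induction j)
    case 0
    show ?case by (rule exI[of _ "{}"], rule exI[of _ "\<lambda>_. {}"]) (simp add: core_assignment_def)
  next
    case (Suc j)
    then obtain D core where D: "card D = j" and core: "core_assignment P T (4 * card P) D core"
      by auto
    obtain q C where "q \<in> P - D" "core_assignment P T (4 * card P) (insert q D) (core(q := C))"
      using core_assignment_extend[OF assms core] D Suc.prems by auto
    moreover have "finite D"
      using core_assignmentD(1)[OF core] assms(1) finite_subset unfolding otimes_graph_def by blast
    ultimately show ?case using D by (intro exI[of _ "insert q D"]) auto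
  qed
  then obtain D core where "card D = card P" and core: "core_assignment P T (4 * card P) D core"
    by blast
  moreover have "finite P" using assms(1) unfolding otimes_graph_def by auto
  ultimately have "D = P" using card_subset_eq core_assignmentD(1)[OF core] by blast
  thus ?thesis using core that by blast
qed

end
lemma doubleton_related_eq:
  assumes "{u, v} = {u', v'}" "r u a" "r v b" "r u' a'" "r v' b'"
    and "\<And>x c c'. x \<in> {u, v} \<Longrightarrow> r x c \<Longrightarrow> r x c' \<Longrightarrow> c = c'"
  shows "{a, b} = {a', b'}"
proof -
  have unique: "c = c'" if "x \<in> {u, v}" "r x c" "r x c'" for x c c'
    using assms(6) that .
  consider "u = u'" "v = v'" | "u = v'" "v = u'"
    using assms(1) unfolding doubleton_eq_iff by blast
  then show ?thesis
  proof cases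
    case 1
    then show ?thesis using unique[of u a a'] unique[of v b b'] assms(2-5) by simp
  next
    case 2
    then show ?thesis using unique[of u a b'] unique[of v b a'] assms(2-5) by auto
  qed
qed

locale graph_realization = universe mem for mem :: "'u \<Rightarrow> 'u \<Rightarrow> bool" +
  fixes P :: "nat set" and T :: "nat set \<Rightarrow> nat set" and R :: "(nat \<times> nat) set"
    and core :: "nat \<Rightarrow> 'u set"
  assumes otimes_graph: "otimes_graph P T"
    and topological_order: "topological_order P T R"
    and core_assignment: "core_assignment P T (4 * card P) P core"
begin

lemmas core_props = core_assignmentD[OF core_assignment]

lemma finite_places: "finite P"
  using otimes_graph unfolding otimes_graph_def by auto

lemma targets_subset: "a \<in> P \<Longrightarrow> b \<in> P \<Longrightarrow> T {a, b} \<subseteq> P"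
  using otimes_graph unfolding otimes_graph_def by (auto simp: mem_nodes_iff)

lemma strict_linear_order: "strict_linear_order_on P R"
  using topological_order unfolding topological_order_def by auto

lemma max_target:
  assumes "a \<in> P" "b \<in> P" "T {a, b} \<noteq> {}"
  shows "max_wrt R (T {a, b}) \<in> T {a, b}"
proof -
  have "T {a, b} \<subseteq> P" using targets_subset assms(1,2) .
  moreover have "finite (T {a, b})" using calculation finite_places finite_subset by blast
  ultimately show ?thesis using max_wrt_greatest(1)[OF strict_linear_order] assms(3) by blast
qed

lemma below_max_target:
  assumes "a \<in> P" "b \<in> P" "T {a, b} \<noteq> {}"
  shows "(a, max_wrt R (T {a, b})) \<in> R" "(b, max_wrt R (T {a, b})) \<in> R"
proof -
  have "trans R" using strict_linear_order unfolding strict_linear_order_on_def by blast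
  moreover have "{a, b} \<in> nodes P" using assms(1,2) by (auto simp: mem_nodes_iff)
  hence "(max_wrt R {a, b}, max_wrt R (T {a, b})) \<in> R"
    using topological_order assms(3) unfolding topological_order_def by blast
  moreover have "x = max_wrt R {a, b} \<or> (x, max_wrt R {a, b}) \<in> R" if "x \<in> {a, b}" for x
    using max_wrt_greatest(2)[OF strict_linear_order, of "{a, b}" x] assms(1,2) that by auto
  ultimately show "(a, max_wrt R (T {a, b})) \<in> R" "(b, max_wrt R (T {a, b})) \<in> R"
    by (metis insertCI transD)+
qed

text \<open>Pairs lying in a core are excluded from the second rule so that every set realizes at most
  one place; taking the R-greatest target places both components of a realization of p R-below p,
  which gives finiteness.\<close>

inductive_set realizes :: "('u \<times> nat) set" where
  core: "p \<in> P \<Longrightarrow> e \<in> core p \<Longrightarrow> (e, p) \<in> realizes"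
| upair: "(u, a) \<in> realizes \<Longrightarrow> (v, b) \<in> realizes \<Longrightarrow> T {a, b} \<noteq> {} \<Longrightarrow>
    upair u v \<notin> (\<Union>p\<in>P. core p) \<Longrightarrow> (upair u v, max_wrt R (T {a, b})) \<in> realizes"

lemma realizes_place: "(e, p) \<in> realizes \<Longrightarrow> p \<in> P"
proof (induction rule: realizes.induct)
  case (upair u a v b)
  have "max_wrt R (T {a, b}) \<in> T {a, b}" using max_target upair.IH upair.hyps(3) by blast
  then show ?case using targets_subset upair.IH by blast
qed simp

lemma realizes_hered_finite: "(e, p) \<in> realizes \<Longrightarrow> hered_finite e"
  by (induction rule: realizes.induct) (use core_props(4) hered_finite_upair in blast)+

text \<open>A pair determines its components and hence, inductively, the node it comes from.\<close>

lemma realizes_functional: "(e, p) \<in> realizes \<Longrightarrow> (e, p') \<in> realizes \<Longrightarrow> p = p'"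
proof (induction e arbitrary: p p' rule: wfp_induct_rule[OF wfp_mem])
  case (1 e)
  show ?case
  proof (cases "e \<in> (\<Union>p\<in>P. core p)")
    case True
    have "e \<in> core p" using "1.prems"(1) True by (cases rule: realizes.cases) auto
    moreover have "e \<in> core p'" using "1.prems"(2) True by (cases rule: realizes.cases) auto
    moreover have "p \<in> P" "p' \<in> P" using "1.prems" realizes_place by auto
    ultimately show ?thesis using core_props(5) by blast
  next
    case False
    obtain u v a b where e: "e = upair u v" "(u, a) \<in> realizes" "(v, b) \<in> realizes"
        "p = max_wrt R (T {a, b})"
      using "1.prems"(1) False by (cases rule: realizes.cases) auto
    obtain u' v' a' b' where e': "e = upair u' v'" "(u', a') \<in> realizes" "(v', b') \<in> realizes"
        "p' = max_wrt R (T {a', b'})"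
      using "1.prems"(2) False by (cases rule: realizes.cases) auto
    have "{a, b} = {a', b'}"
    proof (rule doubleton_related_eq[of u v u' v' "\<lambda>x c. (x, c) \<in> realizes"])
      show "{u, v} = {u', v'}" using e(1) e'(1) upair_inject by metis
      show "\<And>x c c'. x \<in> {u, v} \<Longrightarrow> (x, c) \<in> realizes \<Longrightarrow> (x, c') \<in> realizes \<Longrightarrow> c = c'"
        using "1.IH" mem_upair unfolding e(1) by blast
    qed (fact e e')+
    then show ?thesis using e(4) e'(4) by simp
  qed
qed

definition realized :: "nat \<Rightarrow> 'u set" where
  "realized p = {e. (e, p) \<in> realizes}"

lemma wf_order: "wf R"
proof (rule finite_acyclic_wf)
  have "R \<subseteq> P \<times> P" using topological_order unfolding topological_order_def by blast
  thus "finite R" using finite_subset finite_places by blast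
  show "acyclic R"
    using strict_linear_order unfolding strict_linear_order_on_def acyclic_irrefl by simp
qed

lemma finite_realized: "finite (realized p)"
  using wf_order
proof (induction p rule: wf_induct_rule)
  case (less p)
  show ?case
  proof (cases "p \<in> P")
    case False
    then have "realized p = {}" unfolding realized_def using realizes_place by blast
    then show ?thesis by simp
  next
    case True
    let ?below = "\<Union>a\<in>{a. (a, p) \<in> R}. realized a"
    have "{a. (a, p) \<in> R} \<subseteq> P"
      using topological_order unfolding topological_order_def by blast
    hence "finite {a. (a, p) \<in> R}" using finite_places finite_subset by blast
    hence "finite ?below" using less.IH by blast
    hence "finite (core p \<union> (\<lambda>(u, v). upair u v) ` (?below \<times> ?below))"
      using core_props(2)[OF True] by simp
    moreover have "realized p \<subseteq> core p \<union> (\<lambda>(u, v). upair u v) ` (?below \<times> ?below)"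
    proof
      fix e assume "e \<in> realized p"
      hence "(e, p) \<in> realizes" unfolding realized_def by simp
      thus "e \<in> core p \<union> (\<lambda>(u, v). upair u v) ` (?below \<times> ?below)"
      proof (cases rule: realizes.cases)
        case (upair u a v b)
        have "a \<in> P" "b \<in> P" using upair(3,4) realizes_place by blast+
        hence "(a, p) \<in> R" "(b, p) \<in> R" using below_max_target upair(2,5) by simp_all
        hence "(u, v) \<in> ?below \<times> ?below" using upair(3,4) unfolding realized_def by blast
        hence "upair u v \<in> (\<lambda>(u, v). upair u v) ` (?below \<times> ?below)" by (rule rev_image_eqI) simp
        then show ?thesis using upair(1) by blast
      qed blast
    qed
    ultimately show ?thesis by (rule finite_subset[rotated])
  qed
qed

lemma realized_nonempty:
  assumes "p \<in> P" shows "realized p \<noteq> {}"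
proof -
  have "card (core p) > 0" using core_props(3)[OF assms] assms finite_places by (auto simp: card_gt_0_iff)
  moreover have "core p \<subseteq> realized p" unfolding realized_def using realizes.core[OF assms] by blast
  ultimately show ?thesis by auto
qed

lemma realizes_non_source_upair:
  assumes "(e, q) \<in> realizes" "\<not> source_place P T q"
  obtains u v a b where "(u, a) \<in> realizes" "(v, b) \<in> realizes" "e = upair u v" "q \<in> T {a, b}"
  using assms(1)
proof (cases rule: realizes.cases)
  case core
  then show ?thesis
    using core_props(7) assms(2) realizes.core that unfolding pair_of_cores_def by blast
next
  case (upair u a v b)
  have "a \<in> P" "b \<in> P" using upair(3,4) realizes_place by blast+
  then show ?thesis using max_target that upair by metis
qed

lemma realizes_upair:
  assumes u: "(u, a) \<in> realizes" and v: "(v, b) \<in> realizes" and "T {a, b} \<noteq> {}"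
  obtains q where "q \<in> T {a, b}" "(upair u v, q) \<in> realizes"
proof (cases "upair u v \<in> (\<Union>p\<in>P. core p)")
  case True
  then obtain q where q: "q \<in> P" "upair u v \<in> core q" by blast
  have "\<not> source_place P T q"
    using core_props(6)[OF q(1)] q(2) atom_not_upair by blast
  then obtain u' v' a' b' where uv': "a' \<in> P" "b' \<in> P" "u' \<in> core a'" "v' \<in> core b'"
      "upair u v = upair u' v'" "q \<in> T {a', b'}"
    using core_props(7)[OF q(1) _ q(2)] unfolding pair_of_cores_def by blast
  have "{a, b} = {a', b'}"
  proof (rule doubleton_related_eq[of u v u' v' "\<lambda>x c. (x, c) \<in> realizes"])
    show "{u, v} = {u', v'}" using uv'(5) upair_inject by blast
  qed (use u v uv'(1-4) realizes.core realizes_functional in auto)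
  then show ?thesis using that uv'(6) realizes.core[OF q] by auto
next
  case False
  have "a \<in> P" "b \<in> P" using u v realizes_place by blast+
  then show ?thesis using that realizes.upair[OF u v \<open>T {a, b} \<noteq> {}\<close> False] max_target \<open>T {a, b} \<noteq> {}\<close>
    by blast
qed

end

context graph_realization
begin

definition model_set :: "nat set \<Rightarrow> 'u" where
  "model_set S = set_of (\<Union>p\<in>S. realized p)"

lemma finite_realized_Union: "finite (\<Union>p\<in>S. realized p)"
proof -
  have "finite (\<Union>p\<in>P. realized p)" by (simp add: finite_places finite_realized)
  then show ?thesis
    by (rule finite_subset[rotated]) (use realizes_place in \<open>auto simp: realized_def\<close>)
qed

lemma elems_model_set: "elems mem (model_set S) = (\<Union>p\<in>S. realized p)"
  unfolding model_set_def by (rule elems_set_of[OF finite_realized_Union])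

lemma mem_model_set: "mem e (model_set S) \<longleftrightarrow> (\<exists>p\<in>S. (e, p) \<in> realizes)"
proof -
  have "e \<in> elems mem (model_set S) \<longleftrightarrow> e \<in> (\<Union>p\<in>S. realized p)" by (simp only: elems_model_set)
  thus ?thesis unfolding elems_def realized_def by simp
qed

lemma hered_finite_model_set: "hered_finite (model_set S)"
  unfolding model_set_def
  by (rule hered_finite_set_of[OF finite_realized_Union]) (auto simp: realized_def intro: realizes_hered_finite)

lemma model_set_neq:
  assumes "A \<subseteq> P" "B \<subseteq> P" "A \<noteq> B"
  shows "model_set A \<noteq> model_set B"
proof
  assume eq: "model_set A = model_set B"
  obtain p where p: "p \<in> A - B \<or> p \<in> B - A" using assms(3) by blast
  then obtain e where e: "(e, p) \<in> realizes"
    using realized_nonempty assms(1,2) unfolding realized_def by blast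
  have "mem e (model_set S) \<longleftrightarrow> p \<in> S" for S
    unfolding mem_model_set using e realizes_functional by blast
  from this[of A] this[of B] have "p \<in> A \<longleftrightarrow> p \<in> B" by (simp only: eq)
  then show False using p by blast
qed

lemma mem_model_set_otimesD:
  assumes "F y \<subseteq> P" "F z \<subseteq> P" and "fulfills_lit P T F (LTens x y z)"
    and "mem w (model_set (F x))"
  obtains u v where "mem u (model_set (F y))" "mem v (model_set (F z))" "elems mem w = {u, v}"
proof -
  have covered: "F x \<subseteq> (\<Union>A\<in>set_otimes (F y) (F z). T A)"
    and separated: "(\<Union>A\<in>nodes P - set_otimes (F y) (F z). T A) \<inter> F x = {}"
    using assms(3) by simp_all
  obtain q where q: "q \<in> F x" "(w, q) \<in> realizes"
    using assms(4) unfolding mem_model_set by blast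
  obtain A where A: "A \<in> set_otimes (F y) (F z)" "q \<in> T A"
    using covered q(1) by blast
  have "A \<in> nodes P" using A(1) assms(1,2) unfolding nodes_def set_otimes_def by blast
  hence "\<not> source_place P T q" using A(2) unfolding source_place_def by blast
  with q(2) obtain u v a b where uv: "(u, a) \<in> realizes" "(v, b) \<in> realizes" "w = upair u v"
      "q \<in> T {a, b}"
    by (rule realizes_non_source_upair)
  have "{a, b} \<in> nodes P" using uv(1,2) realizes_place by (auto simp: mem_nodes_iff)
  hence "{a, b} \<in> set_otimes (F y) (F z)" using separated uv(4) q(1) by blast
  then obtain a' b' where ab': "{a, b} = {a', b'}" "a' \<in> F y" "b' \<in> F z"
    unfolding set_otimes_def by blast
  have w: "elems mem w = {u, v}" using uv(3) elems_upair by simp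
  consider "a = a'" "b = b'" | "a = b'" "b = a'" using ab'(1) by (auto simp: doubleton_eq_iff)
  then show ?thesis
  proof cases
    case 1
    hence "mem u (model_set (F y))" "mem v (model_set (F z))"
      using uv(1,2) ab'(2,3) unfolding mem_model_set by blast+
    then show ?thesis using that w by blast
  next
    case 2
    hence "mem v (model_set (F y))" "mem u (model_set (F z))"
      using uv(1,2) ab'(2,3) unfolding mem_model_set by blast+
    moreover have "elems mem w = {v, u}" using w by (simp add: insert_commute)
    ultimately show ?thesis using that by blast
  qed
qed

lemma model_set_otimes:
  assumes "F y \<subseteq> P" "F z \<subseteq> P" and "fulfills_lit P T F (LTens x y z)"
  shows "elems mem (model_set (F x)) =
    {w. \<exists>u v. mem u (model_set (F y)) \<and> mem v (model_set (F z)) \<and> elems mem w = {u, v}}"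
proof (intro set_eqI iffI)
  fix w assume "w \<in> elems mem (model_set (F x))"
  then show "w \<in> {w. \<exists>u v. mem u (model_set (F y)) \<and> mem v (model_set (F z)) \<and> elems mem w = {u, v}}"
    using mem_model_set_otimesD[OF assms] unfolding elems_def by blast
next
  have targets: "\<And>a b. a \<in> F y \<Longrightarrow> b \<in> F z \<Longrightarrow> T {a, b} \<noteq> {} \<and> T {a, b} \<subseteq> F x"
    using assms(3) by simp
  fix w assume "w \<in> {w. \<exists>u v. mem u (model_set (F y)) \<and> mem v (model_set (F z)) \<and> elems mem w = {u, v}}"
  then obtain u v a b where uv: "a \<in> F y" "(u, a) \<in> realizes" "b \<in> F z" "(v, b) \<in> realizes"
      "elems mem w = {u, v}"
    unfolding mem_model_set by blast
  obtain q where "q \<in> T {a, b}" "(upair u v, q) \<in> realizes"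
    using realizes_upair[OF uv(2,4)] targets[OF uv(1,3)] by blast
  then show "w \<in> elems mem (model_set (F x))"
    using targets[OF uv(1,3)] upair_unique[OF uv(5)] unfolding elems_def mem_model_set by blast
qed

lemma realized_Union_Diff:
  "(\<Union>p\<in>A - B. realized p) = (\<Union>p\<in>A. realized p) - (\<Union>p\<in>B. realized p)"
  unfolding realized_def using realizes_functional by blast

lemma satisfies_model_set:
  assumes "fulfilling P T F \<Phi>"
  shows "satisfies mem (model_set \<circ> F) \<Phi>"
  unfolding satisfies_def
proof
  fix l assume l: "l \<in> set \<Phi>"
  have sub: "F v \<subseteq> P" if "v \<in> lit_vars l" for v
    using assms l that unfolding fulfilling_def vars_def by blast
  have fulfilled: "fulfills_lit P T F l" using assms l unfolding fulfilling_def by blast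
  show "sat_lit mem (model_set \<circ> F) l"
  proof (cases l)
    case (LUn x y z)
    then show ?thesis using fulfilled by (simp add: elems_model_set)
  next
    case (LDiff x y z)
    then show ?thesis using fulfilled by (simp add: elems_model_set realized_Union_Diff)
  next
    case (LTens x y z)
    have "F y \<subseteq> P" "F z \<subseteq> P" using sub LTens by simp_all
    then show ?thesis using model_set_otimes fulfilled LTens by simp
  next
    case (LNeq x y)
    have "F x \<subseteq> P" "F y \<subseteq> P" using sub LNeq by simp_all
    then show ?thesis using model_set_neq fulfilled LNeq by simp
  qed
qed

end

theorem hf_sat_if_fulfills:
  assumes "set_universe mem" "otimes_graph P T" "accessible P T" "topological_order P T R"
    and "fulfills P T \<Phi>"
  shows "hf_sat mem \<Phi>"
proof -
  interpret universe mem by (rule universe.intro[OF assms(1)])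
  obtain core where "core_assignment P T (4 * card P) P core"
    using core_assignment_exists assms(2,3) by blast
  then interpret graph_realization mem P T R core
    using assms(2,4) by unfold_locales
  obtain F where "fulfilling P T F \<Phi>" using assms(5) unfolding fulfills_def by blast
  hence "satisfies mem (model_set \<circ> F) \<Phi>" by (rule satisfies_model_set)
  moreover have "finite (\<Union>v\<in>vars \<Phi>. {z. mem\<^sup>+\<^sup>+ z (model_set (F v))})"
    using hered_finite_model_set unfolding hered_finite_def by (intro finite_UN_I[OF finite_vars])
  hence "finite {z. \<exists>v\<in>vars \<Phi>. mem\<^sup>+\<^sup>+ z ((model_set \<circ> F) v)}"
    by (rule finite_subset[rotated]) auto
  ultimately show ?thesis unfolding hf_sat_def by blast
qed

section \<open>From a finite model to a graph\<close>

locale finite_model = universe mem for mem :: "'u \<Rightarrow> 'u \<Rightarrow> bool" +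
  fixes \<Phi> :: "'v literal list" and M :: "'v \<Rightarrow> 'u"
  assumes satisfies: "satisfies mem M \<Phi>"
    and finite_union: "finite (\<Union>v\<in>vars \<Phi>. elems mem (M v))"
begin

definition support :: "'u set" where
  "support = (\<Union>v\<in>vars \<Phi>. elems mem (M v))"

definition venn_region :: "'u \<Rightarrow> 'v set" where
  "venn_region w = {v \<in> vars \<Phi>. mem w (M v)}"

definition region_code :: "'v set \<Rightarrow> nat" where
  "region_code = (SOME f. inj_on f (Pow (vars \<Phi>)))"

definition place :: "'u \<Rightarrow> nat" where
  "place w = region_code (venn_region w)"

definition place_set :: "'v \<Rightarrow> nat set" where
  "place_set v = place ` elems mem (M v)"

definition places :: "nat set" where
  "places = place ` support"

definition tensor_node :: "nat set \<Rightarrow> bool" where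
  "tensor_node A \<longleftrightarrow> (\<exists>x y z. LTens x y z \<in> set \<Phi> \<and> A \<in> set_otimes (place_set y) (place_set z))"

definition targets :: "nat set \<Rightarrow> nat set" where
  "targets A = (if tensor_node A then
     {place w | w. w \<in> support \<and> (\<exists>u v. u \<in> support \<and> v \<in> support \<and> elems mem w = {u, v} \<and>
        A = {place u, place v})}
   else {})"

lemma finite_support: "finite support"
  using finite_union unfolding support_def .

lemma place_eq_imp_venn_region_eq:
  assumes "place u = place w" shows "venn_region u = venn_region w"
proof -
  have "finite (Pow (vars \<Phi>))" using finite_vars by simp
  then obtain f :: "'v set \<Rightarrow> nat" where "inj_on f (Pow (vars \<Phi>))"
    using finite_imp_inj_to_nat_seg by blast
  hence "inj_on region_code (Pow (vars \<Phi>))"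
    unfolding region_code_def by (rule someI[where P = "\<lambda>f. inj_on f (Pow (vars \<Phi>))"])
  thus ?thesis using assms unfolding place_def inj_on_def venn_region_def by blast
qed

lemma mem_support: "v \<in> vars \<Phi> \<Longrightarrow> mem u (M v) \<Longrightarrow> u \<in> support"
  unfolding support_def elems_def by blast

lemma place_in_places: "w \<in> support \<Longrightarrow> place w \<in> places"
  unfolding places_def by blast

lemma mem_place_set_iff: "q \<in> place_set v \<longleftrightarrow> (\<exists>w. mem w (M v) \<and> q = place w)"
  unfolding place_set_def elems_def by blast

lemma place_in_place_set_iff:
  assumes "x \<in> vars \<Phi>" "u \<in> support"
  shows "place u \<in> place_set x \<longleftrightarrow> mem u (M x)"
proof
  assume "place u \<in> place_set x"
  then obtain w where "mem w (M x)" "place u = place w" unfolding mem_place_set_iff by blast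
  thus "mem u (M x)" using place_eq_imp_venn_region_eq assms(1) unfolding venn_region_def by blast
qed (auto simp: mem_place_set_iff)

lemma sat_literal: "l \<in> set \<Phi> \<Longrightarrow> sat_lit mem M l"
  using satisfies unfolding satisfies_def by blast

lemma mem_tensor_iff:
  assumes "LTens x y z \<in> set \<Phi>"
  shows "mem w (M x) \<longleftrightarrow> (\<exists>u v. mem u (M y) \<and> mem v (M z) \<and> elems mem w = {u, v})"
proof -
  have "w \<in> elems mem (M x) \<longleftrightarrow> (\<exists>u v. mem u (M y) \<and> mem v (M z) \<and> elems mem w = {u, v})"
    using sat_literal[OF assms] by simp
  thus ?thesis unfolding elems_def[of mem "M x"] by simp
qed

text \<open>Membership in M x depends only on the regions of the components of a pair: this is what
  makes the targets well defined.\<close>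

lemma mem_tensor_if_places:
  assumes l: "LTens x y z \<in> set \<Phi>" and A: "A \<in> set_otimes (place_set y) (place_set z)"
    and w: "u \<in> support" "v \<in> support" "elems mem w = {u, v}" "A = {place u, place v}"
  shows "mem w (M x)"
proof -
  have V: "y \<in> vars \<Phi>" "z \<in> vars \<Phi>" using lit_vars_subset_vars[OF l] by auto
  obtain p q where pq: "A = {p, q}" "p \<in> place_set y" "q \<in> place_set z"
    using A unfolding set_otimes_def by blast
  consider "place u = p" "place v = q" | "place u = q" "place v = p"
    using pq(1) w(4) by (auto simp: doubleton_eq_iff)
  then show ?thesis
  proof cases
    case 1
    hence "mem u (M y)" "mem v (M z)"
      using pq place_in_place_set_iff[OF V(1) w(1)] place_in_place_set_iff[OF V(2) w(2)] by simp_all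
    then show ?thesis using mem_tensor_iff[OF l] w(3) by blast
  next
    case 2
    hence "mem v (M y)" "mem u (M z)"
      using pq place_in_place_set_iff[OF V(1) w(2)] place_in_place_set_iff[OF V(2) w(1)] by simp_all
    moreover have "elems mem w = {v, u}" using w(3) by (simp add: insert_commute)
    ultimately show ?thesis using mem_tensor_iff[OF l] by blast
  qed
qed

lemma targetsI:
  "tensor_node A \<Longrightarrow> w \<in> support \<Longrightarrow> u \<in> support \<Longrightarrow> v \<in> support \<Longrightarrow> elems mem w = {u, v} \<Longrightarrow>
    A = {place u, place v} \<Longrightarrow> place w \<in> targets A"
  unfolding targets_def by simp blast

lemma targetsE:
  assumes "r \<in> targets A"
  obtains w u v where "tensor_node A" "r = place w" "w \<in> support" "u \<in> support" "v \<in> support"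
    "elems mem w = {u, v}" "A = {place u, place v}"
  using assms that unfolding targets_def by (cases "tensor_node A") auto

lemma targets_subset_places: "targets A \<subseteq> places"
  unfolding targets_def places_def by auto

lemma targets_subset_place_set:
  assumes "LTens x y z \<in> set \<Phi>" "A \<in> set_otimes (place_set y) (place_set z)"
  shows "targets A \<subseteq> place_set x"
proof
  fix r assume "r \<in> targets A"
  then obtain w u v where w: "r = place w" "w \<in> support" "u \<in> support" "v \<in> support"
      "elems mem w = {u, v}" "A = {place u, place v}"
    by (rule targetsE)
  have "mem w (M x)" using mem_tensor_if_places[OF assms w(3-6)] .
  thus "r \<in> place_set x" using w(1) unfolding mem_place_set_iff by blast
qed

lemma place_set_Un:
  assumes "LUn x y z \<in> set \<Phi>" shows "place_set x = place_set y \<union> place_set z"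
  using sat_literal[OF assms] unfolding place_set_def by (simp add: image_Un)

lemma place_set_Diff:
  assumes l: "LDiff x y z \<in> set \<Phi>" shows "place_set x = place_set y - place_set z"
proof -
  have V: "x \<in> vars \<Phi>" "y \<in> vars \<Phi>" "z \<in> vars \<Phi>" using lit_vars_subset_vars[OF l] by auto
  have "elems mem (M x) = elems mem (M y) - elems mem (M z)" using sat_literal[OF l] by simp
  hence diff: "mem w (M x) \<longleftrightarrow> mem w (M y) \<and> \<not> mem w (M z)" for w
    unfolding elems_def by blast
  show ?thesis
  proof (intro set_eqI iffI)
    fix q assume "q \<in> place_set x"
    then obtain w where w: "mem w (M x)" "q = place w" unfolding mem_place_set_iff by blast
    have "w \<in> support" using mem_support[OF V(1) w(1)] .
    hence "q \<notin> place_set z" using w diff place_in_place_set_iff[OF V(3)] by blast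
    moreover have "q \<in> place_set y" using w diff unfolding mem_place_set_iff by blast
    ultimately show "q \<in> place_set y - place_set z" by blast
  next
    fix q assume q: "q \<in> place_set y - place_set z"
    hence "q \<in> place_set y" by simp
    then obtain w where w: "mem w (M y)" "q = place w" unfolding mem_place_set_iff by blast
    have "w \<in> support" using mem_support[OF V(2) w(1)] .
    hence "\<not> mem w (M z)" using place_in_place_set_iff[OF V(3)] w q by blast
    then show "q \<in> place_set x" using w diff unfolding mem_place_set_iff by blast
  qed
qed

lemma place_set_neq:
  assumes l: "LNeq x y \<in> set \<Phi>" shows "place_set x \<noteq> place_set y"
proof -
  have V: "x \<in> vars \<Phi>" "y \<in> vars \<Phi>" using lit_vars_subset_vars[OF l] by auto
  have "M x \<noteq> M y" using sat_literal[OF l] by simp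
  hence "elems mem (M x) \<noteq> elems mem (M y)" using elems_inject by blast
  then obtain w where w: "mem w (M x) \<noteq> mem w (M y)" unfolding elems_def by blast
  hence "w \<in> support" using mem_support V by blast
  hence "(place w \<in> place_set x) \<noteq> (place w \<in> place_set y)"
    using place_in_place_set_iff V w by simp
  thus ?thesis by blast
qed

lemma upair_in_targets:
  assumes l: "LTens x y z \<in> set \<Phi>" and ab: "mem a (M y)" "mem b (M z)"
  shows "upair a b \<in> support" "place (upair a b) \<in> targets {place a, place b}"
proof -
  have V: "x \<in> vars \<Phi>" "y \<in> vars \<Phi>" "z \<in> vars \<Phi>" using lit_vars_subset_vars[OF l] by auto
  show "upair a b \<in> support" using mem_tensor_iff[OF l] ab elems_upair mem_support V(1) by blast
  moreover have "tensor_node {place a, place b}"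
    unfolding tensor_node_def set_otimes_def mem_place_set_iff using l ab by blast
  ultimately show "place (upair a b) \<in> targets {place a, place b}"
    using targetsI elems_upair mem_support V(2,3) ab by blast
qed

lemma fulfills_tensor:
  assumes l: "LTens x y z \<in> set \<Phi>"
  shows "fulfills_lit places targets place_set (LTens x y z)"
proof -
  have V: "x \<in> vars \<Phi>" "y \<in> vars \<Phi>" "z \<in> vars \<Phi>" using lit_vars_subset_vars[OF l] by auto
  have "targets {p, q} \<noteq> {} \<and> targets {p, q} \<subseteq> place_set x"
    if "p \<in> place_set y" "q \<in> place_set z" for p q
    using upair_in_targets[OF l] that targets_subset_place_set[OF l]
    unfolding set_otimes_def mem_place_set_iff by blast
  moreover have "place_set x \<subseteq> (\<Union>A\<in>set_otimes (place_set y) (place_set z). targets A)"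
  proof
    fix r assume "r \<in> place_set x"
    then obtain w where w: "mem w (M x)" "r = place w" unfolding mem_place_set_iff by blast
    then obtain u v where uv: "mem u (M y)" "mem v (M z)" "elems mem w = {u, v}"
      using mem_tensor_iff[OF l] by blast
    have "{place u, place v} \<in> set_otimes (place_set y) (place_set z)"
      using uv unfolding set_otimes_def mem_place_set_iff by blast
    moreover have "r \<in> targets {place u, place v}"
      using upair_in_targets[OF l uv(1,2)] upair_unique[OF uv(3)] w(2) by simp
    ultimately show "r \<in> (\<Union>A\<in>set_otimes (place_set y) (place_set z). targets A)" by blast
  qed
  moreover have "A \<in> set_otimes (place_set y) (place_set z)"
    if r: "r \<in> targets A" "r \<in> place_set x" for A r
  proof -
    obtain w u v where w: "r = place w" "w \<in> support" "u \<in> support" "v \<in> support"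
        "elems mem w = {u, v}" "A = {place u, place v}"
      using r(1) by (rule targetsE)
    have "mem w (M x)" using place_in_place_set_iff[OF V(1) w(2)] r(2) w(1) by simp
    then obtain u' v' where uv: "mem u' (M y)" "mem v' (M z)" "elems mem w = {u', v'}"
      using mem_tensor_iff[OF l] by blast
    have "A = {place u', place v'}"
      using w(5,6) uv(3) by (auto simp: doubleton_eq_iff)
    thus ?thesis using uv unfolding set_otimes_def mem_place_set_iff by blast
  qed
  ultimately show ?thesis by auto
qed

lemma fulfilling_place_set: "fulfilling places targets place_set \<Phi>"
  unfolding fulfilling_def
proof (intro conjI ballI)
  show "place_set v \<subseteq> places" if "v \<in> vars \<Phi>" for v
    using that unfolding place_set_def places_def support_def by blast
  show "fulfills_lit places targets place_set l" if l: "l \<in> set \<Phi>" for l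
    by (cases l) (use l place_set_Un place_set_Diff place_set_neq fulfills_tensor in simp_all)
qed

lemma finite_places: "finite places"
  unfolding places_def using finite_support by simp

lemma otimes_graph_places_targets: "otimes_graph places targets"
  unfolding otimes_graph_def using finite_places targets_subset_places by blast

lemma card_places_le: "card places \<le> 2 ^ card (vars \<Phi>) - 1"
proof -
  have "places = region_code ` venn_region ` support"
    unfolding places_def place_def by (simp add: image_image)
  hence "card places \<le> card (venn_region ` support)"
    using card_image_le[OF finite_imageI[OF finite_support]] by simp
  moreover have "venn_region ` support \<subseteq> Pow (vars \<Phi>) - {{}}"
    unfolding support_def venn_region_def elems_def by blast
  hence "card (venn_region ` support) \<le> card (Pow (vars \<Phi>) - {{}})"
    using finite_vars by (intro card_mono) simp_all
  moreover have "card (Pow (vars \<Phi>) - {{}}) = 2 ^ card (vars \<Phi>) - 1"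
    using card_Pow[OF finite_vars[of \<Phi>]] by (simp add: card_Diff_singleton)
  ultimately show ?thesis by linarith
qed

lemma place_accessible: "w \<in> support \<Longrightarrow> place w \<in> accessible_places places targets"
proof (induction w rule: wfp_induct_rule[OF wfp_mem])
  case (1 w)
  show ?case
  proof (cases "\<exists>x y z. LTens x y z \<in> set \<Phi> \<and> mem w (M x)")
    case True
    then obtain x y z where l: "LTens x y z \<in> set \<Phi>" and wx: "mem w (M x)" by blast
    have V: "y \<in> vars \<Phi>" "z \<in> vars \<Phi>" using lit_vars_subset_vars[OF l] by auto
    obtain u v where uv: "mem u (M y)" "mem v (M z)" "elems mem w = {u, v}"
      using mem_tensor_iff[OF l] wx by blast
    have uv_support: "u \<in> support" "v \<in> support" using mem_support V uv by blast+
    have "mem u w" "mem v w" using uv(3) unfolding elems_def by blast+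
    hence "place u \<in> accessible_places places targets" "place v \<in> accessible_places places targets"
      using "1.IH" uv_support by blast+
    moreover have "{place u, place v} \<in> nodes places"
      using place_in_places uv_support unfolding mem_nodes_iff by blast
    moreover have "tensor_node {place u, place v}"
      unfolding tensor_node_def set_otimes_def mem_place_set_iff using l uv by blast
    hence "place w \<in> targets {place u, place v}" using targetsI "1.prems" uv_support uv(3) by blast
    ultimately show ?thesis using accessible_places.step by blast
  next
    case False
    have "source_place places targets (place w)"
      unfolding source_place_def
    proof (intro conjI ballI notI)
      show "place w \<in> places" using place_in_places "1.prems" .
      fix A assume "A \<in> nodes places" "place w \<in> targets A"
      then obtain x y z where l: "LTens x y z \<in> set \<Phi>"
          and "A \<in> set_otimes (place_set y) (place_set z)"
        using targetsE unfolding tensor_node_def by metis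
      hence "place w \<in> place_set x" using targets_subset_place_set \<open>place w \<in> targets A\<close> by blast
      hence "mem w (M x)" using place_in_place_set_iff[OF _ "1.prems"] lit_vars_subset_vars[OF l] by simp
      thus False using False l by blast
    qed
    then show ?thesis by (rule accessible_places.src)
  qed
qed

lemma accessible_places_targets: "accessible places targets"
  unfolding accessible_def
proof
  fix p assume "p \<in> places"
  then obtain w where "w \<in> support" "p = place w" unfolding places_def by blast
  then show "p \<in> accessible_places places targets" using place_accessible by simp
qed

definition rank :: "'u \<Rightarrow> nat" where
  "rank w = card {z \<in> support. mem\<^sup>+\<^sup>+ z w}"

definition place_rank :: "nat \<Rightarrow> nat" where
  "place_rank p = Max (rank ` {w \<in> support. place w = p})"

definition rank_order :: "(nat \<times> nat) set" where
  "rank_order = {(p, q). p \<in> places \<and> q \<in> places \<and>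
     (place_rank p < place_rank q \<or> (place_rank p = place_rank q \<and> p < q))}"

lemma rank_less: assumes "u \<in> support" "mem u w" shows "rank u < rank w"
proof -
  have "\<not> mem\<^sup>+\<^sup>+ u u" using wfp_imp_irreflp[OF wfp_tranclp[OF wfp_mem]] by (simp add: irreflp_def)
  hence "{z \<in> support. mem\<^sup>+\<^sup>+ z u} \<subset> {z \<in> support. mem\<^sup>+\<^sup>+ z w}"
    using assms by (auto intro: tranclp.trancl_into_trancl)
  moreover have "finite {z \<in> support. mem\<^sup>+\<^sup>+ z w}" using finite_support by simp
  ultimately show ?thesis unfolding rank_def by (rule psubset_card_mono[rotated])
qed

lemma rank_le_place_rank: "w \<in> support \<Longrightarrow> rank w \<le> place_rank (place w)"
  unfolding place_rank_def by (rule Max_ge) (use finite_support in auto)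

lemma place_rank_attained:
  assumes "p \<in> places" obtains w where "w \<in> support" "place w = p" "rank w = place_rank p"
proof -
  have "{w \<in> support. place w = p} \<noteq> {}" using assms unfolding places_def by blast
  hence "place_rank p \<in> rank ` {w \<in> support. place w = p}"
    unfolding place_rank_def using finite_support by (intro Max_in) auto
  thus ?thesis using that by auto
qed

lemma strict_linear_order_rank_order: "strict_linear_order_on places rank_order"
  unfolding strict_linear_order_on_def trans_def irrefl_def total_on_def rank_order_def by auto

lemma tensor_nodeE:
  assumes "tensor_node A"
  obtains x y z a b where "LTens x y z \<in> set \<Phi>" "mem a (M y)" "mem b (M z)" "A = {place a, place b}"
  using assms that unfolding tensor_node_def set_otimes_def mem_place_set_iff by blast

lemma mem_pair_in_targets:
  assumes "tensor_node A" "s \<in> support" "place s \<in> A"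
  obtains w where "w \<in> support" "place w \<in> targets A" "mem s w"
proof -
  obtain x y z a b where l: "LTens x y z \<in> set \<Phi>" and ab: "mem a (M y)" "mem b (M z)"
      and A: "A = {place a, place b}"
    using assms(1) by (rule tensor_nodeE)
  have V: "y \<in> vars \<Phi>" "z \<in> vars \<Phi>" using lit_vars_subset_vars[OF l] by auto
  show ?thesis
  proof (cases "place s = place a")
    case True
    hence "place s \<in> place_set y" using ab(1) unfolding mem_place_set_iff by auto
    hence "mem s (M y)" using place_in_place_set_iff[OF V(1) assms(2)] by simp
    moreover have "A = {place s, place b}" using A True by simp
    ultimately show ?thesis
      by (intro that[OF _ _ mem_upair(1)[where u = s and v = b]]) (simp_all add: upair_in_targets[OF l _ ab(2)])
  next
    case False
    hence "place s = place b" using assms(3) A by blast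
    hence "place s \<in> place_set z" using ab(2) unfolding mem_place_set_iff by auto
    hence "mem s (M z)" using place_in_place_set_iff[OF V(2) assms(2)] by simp
    moreover have "A = {place a, place s}" using A \<open>place s = place b\<close> by simp
    ultimately show ?thesis
      by (intro that[OF _ _ mem_upair(2)[where u = a and v = s]]) (simp_all add: upair_in_targets[OF l ab(1)])
  qed
qed

text \<open>The greatest place of a node A is the region of an element s of maximal rank, and s is a
  component of a pair, of larger rank, whose region is a target of A.\<close>

lemma topological_order_rank_order: "topological_order places targets rank_order"
  unfolding topological_order_def
proof (intro conjI ballI impI)
  show "strict_linear_order_on places rank_order" by (rule strict_linear_order_rank_order)
  show "rank_order \<subseteq> places \<times> places" unfolding rank_order_def by auto
  fix A assume "A \<in> nodes places" "targets A \<noteq> {}"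
  let ?m = "max_wrt rank_order A" and ?M = "max_wrt rank_order (targets A)"
  have "tensor_node A" using \<open>targets A \<noteq> {}\<close> unfolding targets_def by (auto split: if_splits)
  have "A \<subseteq> places" "finite A" "A \<noteq> {}"
    using \<open>A \<in> nodes places\<close> unfolding mem_nodes_iff by auto
  hence "?m \<in> A" using max_wrt_greatest(1)[OF strict_linear_order_rank_order] by blast
  hence m: "?m \<in> places" using \<open>A \<subseteq> places\<close> by blast
  then obtain s where s: "s \<in> support" "place s = ?m" "rank s = place_rank ?m"
    by (rule place_rank_attained)
  obtain w where w: "w \<in> support" "place w \<in> targets A" "mem s w"
    by (rule mem_pair_in_targets[OF \<open>tensor_node A\<close> s(1)]) (use s(2) \<open>?m \<in> A\<close> in simp)
  have "place_rank ?m < place_rank (place w)"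
    using rank_less[OF s(1) w(3)] rank_le_place_rank[OF w(1)] s(3) by simp
  hence "(?m, place w) \<in> rank_order" using m place_in_places[OF w(1)] unfolding rank_order_def by simp
  moreover have "place w = ?M \<or> (place w, ?M) \<in> rank_order"
    using max_wrt_greatest(2)[OF strict_linear_order_rank_order targets_subset_places] w(2)
      finite_places finite_subset targets_subset_places by blast
  ultimately show "(?m, ?M) \<in> rank_order"
    using strict_linear_order_rank_order unfolding strict_linear_order_on_def by (metis transD)
qed

end

lemma fin_sat_if_hf_sat:
  assumes "hf_sat mem \<Phi>" shows "fin_sat mem \<Phi>"
proof -
  obtain M where "satisfies mem M \<Phi>" "finite {z. \<exists>v\<in>vars \<Phi>. mem\<^sup>+\<^sup>+ z (M v)}"
    using assms unfolding hf_sat_def by blast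
  moreover have "(\<Union>v\<in>vars \<Phi>. elems mem (M v)) \<subseteq> {z. \<exists>v\<in>vars \<Phi>. mem\<^sup>+\<^sup>+ z (M v)}"
    unfolding elems_def by auto
  ultimately show ?thesis unfolding fin_sat_def using finite_subset by blast
qed

theorem fulfilling_graph_if_fin_sat:
  fixes mem :: "'u \<Rightarrow> 'u \<Rightarrow> bool" and \<Phi> :: "'v literal list"
  assumes "set_universe mem" "fin_sat mem \<Phi>"
  shows "\<exists>(P :: nat set) T. otimes_graph P T \<and> accessible P T \<and> card P \<le> 2 ^ card (vars \<Phi>) - 1 \<and>
           (\<exists>R. topological_order P T R) \<and> fulfills P T \<Phi>"
proof -
  obtain M where "satisfies mem M \<Phi>" "finite (\<Union>v\<in>vars \<Phi>. elems mem (M v))"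
    using assms(2) unfolding fin_sat_def by blast
  then interpret finite_model mem \<Phi> M
    using assms(1) by unfold_locales
  show ?thesis
    using otimes_graph_places_targets accessible_places_targets card_places_le topological_order_rank_order
      fulfilling_place_set unfolding fulfills_def by blast
qed

theorem mainTheorem3:
  fixes mem :: "'u \<Rightarrow> 'u \<Rightarrow> bool" and \<Phi> :: "'v literal list"
  assumes "set_universe mem"
  shows "(fin_sat mem \<Phi> \<longleftrightarrow> hf_sat mem \<Phi>) \<and>
         (fin_sat mem \<Phi> \<longleftrightarrow>
            (\<exists>(P :: nat set) T. otimes_graph P T \<and> accessible P T \<and>
                card P \<le> 2 ^ card (vars \<Phi>) - 1 \<and>
                (\<exists>R. topological_order P T R) \<and> fulfills P T \<Phi>))"
  using fin_sat_if_hf_sat fulfilling_graph_if_fin_sat[OF assms] hf_sat_if_fulfills[OF assms]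
  by blast

end
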